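(* Let $A$ be the adjacency matrix of an $n$-cell regular network with valency $v$, let $G=\operatorname{Ker}(A-vI)$ be the eigenspace associated with $v$, assume $\dim G>1$, and let $E$ be a direct complement to $F$ in $G$ (so $G=F\oplus E$). Then: (1) for every special Jordan subspace $J\neq F$ to the network contained in $G$, there is a one-dimensional subspace $J'\subseteq E$ which is special in $E$ such that $P(J)=P(J')$ and $F\oplus J=F\oplus J'$; (2) a one-dimensional subspace of $E$ is a special Jordan subspace to the network if and only if it is special in $E$; (3) if $S=F\oplus J_1\oplus\cdots\oplus J_k$ is a direct sum of one-dimensional special Jordan subspaces to the network contained in $G$, then there are one-dimensional subspaces $J_1',\dots,J_k'$ of $E$, each special in $E$, such that $S=F\oplus J_1'\oplus\cdots\oplus J_k'$.
   Context: A regular network is a finite directed graph on cells $1,\dots,n$ (loops and multiple arrows allowed) in which every cell receives the same number $v$ of arrows, called the valency. Its adjacency matrix $A=[a_{ij}]$ has $a_{ij}$ equal to the number of arrows cell $i$ receives from cell $j$; every row sum of $A$ equals $v$. $A$ acts on $\mathbb{C}^n$. (It is known that $v$ is a semisimple eigenvalue of $A$ and $(1,\dots,1)$ is an eigenvector for $v$.) A polydiagonal is a subspace of $\mathbb{C}^n$ of the form $\{x : x_i=x_j \text{ for all } (i,j)\in R\}$ for some (possibly empty) set $R$ of index pairs. $F=\{x_1=\cdots=x_n\}$ is the fully synchrony subspace. $P(W)$ is the smallest polydiagonal containing a subspace $W$. For a subspace $E\subseteq\mathbb{C}^n$, a subspace $W\subseteq E$ is special in $E$ if for every subspace $U\subseteq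 E$ with $\dim U=\dim W$ and $P(U)\subseteq P(W)$ one has $P(U)=P(W)$. For an eigenvalue $\lambda$ of $A$, the generalized eigenspace is $G_\lambda=\operatorname{Ker}(A-\lambda I)^p$ for $p$ large. A Jordan chain of length $k$ for $\lambda$ is a sequence of nonzero vectors $x_1,\dots,x_k$ with $(A-\lambda I)x_1=0$ and $(A-\lambda I)x_i=x_{i-1}$ for $2\le i\le k$; a Jordan subspace is the ($k$-dimensional) span of a Jordan chain. A Jordan subspace $W$ of a generalized eigenspace $G$ is a special Jordan subspace to the network if for every Jordan subspace $U$ of $G$ with $\dim U=\dim W$ and $P(U)\subseteq P(W)$, either $P(U)=P(W)$ or $U=F$. *)

theory Defs
  imports "HOL-Analysis.Analysis"
begin

text \<open>The network is given by its
adjacency matrix with natural-number entries; a x A$i$j is the number of arrows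
cell i receives from cell j.  Vectors live in complex^'n, a vector space over
the complex numbers via the scalar multiplication (*s); linear-algebra notions
(subspace, span, dim) are those of the interpretation vec.\<close>

definition regular_network :: "nat^'n^'n \<Rightarrow> nat \<Rightarrow> bool" where
  "regular_network Adj v \<longleftrightarrow> (\<forall>i. (\<Sum>j\<in>UNIV. Adj$i$j) = v)"

definition cmat :: "nat^'n^'n \<Rightarrow> complex^'n^'n" where
  "cmat Adj = (\<chi> i j. of_nat (Adj$i$j))"

definition polydiagonal :: "(complex^'n) set \<Rightarrow> bool" where
  "polydiagonal D \<longleftrightarrow> (\<exists>R :: ('n \<times> 'n) set. D = {x. \<forall>(i,j)\<in>R. x$i = x$j})"

definition full_sync :: "(complex^'n) set" where
  "full_sync = {x. \<forall>i j. x$i = x$j}"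

text \<open>Smallest polydiagonal containing W (polydiagonals are closed under
intersection, so this intersection is itself a polydiagonal).\<close>
definition poly_closure :: "(complex^'n) set \<Rightarrow> (complex^'n) set" where
  "poly_closure W = \<Inter>{D. polydiagonal D \<and> W \<subseteq> D}"

definition special_in :: "(complex^'n) set \<Rightarrow> (complex^'n) set \<Rightarrow> bool" where
  "special_in E W \<longleftrightarrow> vec.subspace W \<and> W \<subseteq> E \<and>
     (\<forall>U. vec.subspace U \<and> U \<subseteq> E \<and> vec.dim U = vec.dim W \<and>
          poly_closure U \<subseteq> poly_closure W \<longrightarrow> poly_closure U = poly_closure W)"

definition shifted :: "complex^'n^'n \<Rightarrow> complex \<Rightarrow> complex^'n \<Rightarrow> complex^'n" where
  "shifted A lam x = A *v x - lam *s x"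

definition gen_eigenspace :: "complex^'n^'n \<Rightarrow> complex \<Rightarrow> (complex^'n) set" where
  "gen_eigenspace A lam = {x. \<exists>p. (shifted A lam ^^ p) x = 0}"

text \<open>Jordan chain x_1,...,x_k (list index 0 is x_1).\<close>
definition jordan_chain :: "complex^'n^'n \<Rightarrow> complex \<Rightarrow> (complex^'n) list \<Rightarrow> bool" where
  "jordan_chain A lam xs \<longleftrightarrow> xs \<noteq> [] \<and> (\<forall>x\<in>set xs. x \<noteq> 0) \<and>
     shifted A lam (xs!0) = 0 \<and>
     (\<forall>i. 0 < i \<and> i < length xs \<longrightarrow> shifted A lam (xs!i) = xs!(i-1))"

definition jordan_subspace :: "complex^'n^'n \<Rightarrow> complex \<Rightarrow> (complex^'n) set \<Rightarrow> bool" where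
  "jordan_subspace A lam W \<longleftrightarrow> (\<exists>xs. jordan_chain A lam xs \<and> W = vec.span (set xs))"

definition special_jordan :: "complex^'n^'n \<Rightarrow> complex \<Rightarrow> (complex^'n) set \<Rightarrow> bool" where
  "special_jordan A lam W \<longleftrightarrow> jordan_subspace A lam W \<and>
     (\<forall>U. jordan_subspace A lam U \<and> vec.dim U = vec.dim W \<and>
          poly_closure U \<subseteq> poly_closure W \<longrightarrow>
          poly_closure U = poly_closure W \<or> U = full_sync)"

primrec list_sum :: "(complex^'n) set list \<Rightarrow> (complex^'n) set" where
  "list_sum [] = {0}"
| "list_sum (V # Vs) = {x + y | x y. x \<in> V \<and> y \<in> list_sum Vs}"

definition direct_sum :: "(complex^'n) set list \<Rightarrow> bool" where
  "direct_sum Vs \<longleftrightarrow> (\<forall>xs ys. length xs = length Vs \<and> length ys = length Vs \<and>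
      (\<forall>i<length Vs. xs!i \<in> Vs!i \<and> ys!i \<in> Vs!i) \<and> sum_list xs = sum_list ys \<longrightarrow> xs = ys)"

end

theory Submission
  imports Defs
begin

text \<open>A Jordan subspace inside the eigenspace G = Ker(A - vI) is an eigenline, spanned by
  some f + e with f \<in> F and e \<in> E. Every polydiagonal is a subspace containing F, so
  P(span {f + e}) = P(span {e}); moreover span {f + e} and span {e} agree modulo F. Replacing
  each special Jordan line by the line through its E-component therefore preserves the
  polydiagonal closure and the sum with F, and also the directness of that sum because lines
  of E meet F trivially. Speciality in E and speciality among Jordan subspaces then coincide
  for lines of E, since every line of E is a Jordan subspace and none of them is F.\<close>

section \<open>Polydiagonals and the synchrony subspace\<close>

lemma polydiagonal_subspace: "polydiagonal D \<Longrightarrow> vec.subspace D"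
  unfolding polydiagonal_def vec.subspace_def by (auto split: prod.splits)

lemma full_sync_subset_polydiagonal: "polydiagonal D \<Longrightarrow> full_sync \<subseteq> D"
  unfolding polydiagonal_def full_sync_def by auto

lemma subspace_full_sync: "vec.subspace full_sync"
  unfolding full_sync_def vec.subspace_def by (auto, metis)

lemma full_sync_ne_zero: "full_sync \<noteq> {0 :: complex^'n}"
proof
  assume "full_sync = {0 :: complex^'n}"
  moreover have "(\<chi> i. (1 :: complex)) \<in> (full_sync :: (complex^'n) set)"
    unfolding full_sync_def by simp
  ultimately show False by (metis singletonD vec_lambda_beta zero_index zero_neq_one)
qed

lemma span_eq_full_sync:
  fixes u :: "complex^'n"
  assumes "u \<in> full_sync" "u \<noteq> 0"
  shows "vec.span {u} = full_sync"
proof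
  show "vec.span {u} \<subseteq> full_sync"
    using vec.span_minimal[of "{u}"] subspace_full_sync assms(1) by auto
  show "full_sync \<subseteq> vec.span {u}"
  proof
    fix x :: "complex^'n" assume x: "x \<in> full_sync"
    obtain i where i: "u$i \<noteq> 0" using assms(2) by (metis vec_eq_iff zero_index)
    have "x = (x$i / u$i) *s u"
      using x assms(1) i unfolding full_sync_def
      by (simp add: vec_eq_iff) (metis nonzero_mult_div_cancel_right)
    thus "x \<in> vec.span {u}" unfolding vec.span_singleton by blast
  qed
qed

lemma span_singleton_subset_iff: "vec.subspace D \<Longrightarrow> vec.span {x} \<subseteq> D \<longleftrightarrow> x \<in> D"
  using vec.span_minimal[of "{x}" D] vec.span_base[of x "{x}"] by auto

lemma poly_closure_span_add_sync:
  assumes f: "f \<in> full_sync"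
  shows "poly_closure (vec.span {f + e}) = poly_closure (vec.span {e})"
proof -
  have "vec.span {f + e} \<subseteq> D \<longleftrightarrow> vec.span {e} \<subseteq> D" if D: "polydiagonal D" for D
  proof -
    have D_sub: "vec.subspace D" and "f \<in> D"
      using D f polydiagonal_subspace full_sync_subset_polydiagonal by auto
    hence "f + e \<in> D \<longleftrightarrow> e \<in> D"
      by (metis add_diff_cancel_left' vec.subspace_add vec.subspace_diff)
    thus ?thesis using D_sub by (simp add: span_singleton_subset_iff)
  qed
  thus ?thesis unfolding poly_closure_def by metis
qed

lemma dim_eq_1_imp_span_singleton:
  assumes "vec.subspace U" "vec.dim U = 1"
  obtains u where "u \<noteq> 0" "U = vec.span {u}"
proof -
  obtain B where B: "B \<subseteq> U" "vec.independent B" "U \<subseteq> vec.span B" "card B = vec.dim U"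
    using vec.basis_exists by blast
  then obtain u where "B = {u}" using assms(2) card_1_singletonE by metis
  thus ?thesis using that B assms(1) vec.span_minimal[of B U] by auto
qed

section \<open>Jordan subspaces inside an eigenspace\<close>

lemma jordan_subspace_eigenvector:
  assumes "shifted A lam u = 0" "u \<noteq> 0"
  shows "jordan_subspace A lam (vec.span {u})"
  unfolding jordan_subspace_def jordan_chain_def
  by (rule exI[of _ "[u]"]) (use assms in auto)

lemma jordan_subspace_dim_1:
  assumes "jordan_subspace A lam U" "vec.dim U = 1"
  obtains u where "u \<noteq> 0" "shifted A lam u = 0" "U = vec.span {u}"
proof -
  obtain xs where xs: "jordan_chain A lam xs" "U = vec.span (set xs)"
    using assms(1) unfolding jordan_subspace_def by blast
  let ?u = "xs!0"
  have u: "?u \<noteq> 0" "shifted A lam ?u = 0" "?u \<in> U"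
    using xs unfolding jordan_chain_def by (auto intro: vec.span_base)
  have "vec.span {?u} = U"
  proof (rule vec.subspace_dim_equal)
    show "vec.span {?u} \<subseteq> U" using u(3) xs(2) by (simp add: span_singleton_subset_iff)
    show "vec.dim U \<le> vec.dim (vec.span {?u})" using u(1) assms(2) by simp
  qed (use xs(2) in auto)
  thus ?thesis using that u by metis
qed

text \<open>A Jordan chain of length at least two leaves the kernel of the shifted matrix,
  so a Jordan subspace inside the eigenspace is an eigenline.\<close>
lemma jordan_subspace_in_kernel_dim_1:
  assumes "jordan_subspace A lam U" "U \<subseteq> {x. shifted A lam x = 0}"
  shows "vec.dim U = 1"
proof -
  obtain xs where xs: "jordan_chain A lam xs" "U = vec.span (set xs)"
    using assms(1) unfolding jordan_subspace_def by blast
  have "length xs = 1"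
  proof (rule ccontr)
    assume "length xs \<noteq> 1"
    moreover have "xs \<noteq> []" using xs(1) unfolding jordan_chain_def by auto
    ultimately have "1 < length xs" by (cases xs) auto
    moreover from this have "xs!1 \<in> U" using xs(2) by (simp add: vec.span_base)
    hence "shifted A lam (xs!1) = 0" using assms(2) by auto
    ultimately show False using xs(1) unfolding jordan_chain_def by force
  qed
  then obtain x where "xs = [x]" "x \<noteq> 0"
    using xs(1) unfolding jordan_chain_def by (cases xs) auto
  thus ?thesis using xs(2) by simp
qed

section \<open>Sums of subspaces modulo a subspace\<close>

definition subset_mod :: "(complex^'n) set \<Rightarrow> (complex^'n) set \<Rightarrow> (complex^'n) set \<Rightarrow> bool"
  where "subset_mod F J J' \<longleftrightarrow> (\<forall>w\<in>J. \<exists>z\<in>J'. w - z \<in> F)"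

lemma subset_mod_span_singleton:
  assumes "vec.subspace F" "x - y \<in> F"
  shows "subset_mod F (vec.span {x}) (vec.span {y})"
  unfolding subset_mod_def vec.span_singleton
proof clarify
  fix c
  have "c *s x - c *s y = c *s (x - y)" by (simp add: vec.scale_right_diff_distrib)
  thus "\<exists>z\<in>range (\<lambda>k. k *s y). c *s x - z \<in> F" using assms vec.subspace_scale by fastforce
qed

lemma sum_list_diff_mem_subspace:
  assumes "vec.subspace F" "list_all2 (\<lambda>x y. x - y \<in> F) xs ys"
  shows "sum_list xs - sum_list ys \<in> F"
  using assms(2)
proof (induction rule: list_all2_induct)
  case Nil
  show ?case using assms(1) vec.subspace_0 by simp
next
  case (Cons x xs y ys)
  have "sum_list (x # xs) - sum_list (y # ys) = (x - y) + (sum_list xs - sum_list ys)" by simp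
  thus ?case using Cons assms(1) vec.subspace_add by metis
qed

lemma list_sum_subset_mod:
  assumes "vec.subspace F" "list_all2 (subset_mod F) Js Js'" "x \<in> list_sum Js"
  shows "\<exists>y\<in>list_sum Js'. x - y \<in> F"
  using assms(2,3)
proof (induction arbitrary: x rule: list_all2_induct)
  case Nil
  thus ?case using assms(1) vec.subspace_0 by auto
next
  case (Cons J Js J' Js')
  obtain a b where ab: "x = a + b" "a \<in> J" "b \<in> list_sum Js" using Cons.prems by auto
  obtain z where z: "z \<in> J'" "a - z \<in> F" using Cons.hyps(1) ab(2) unfolding subset_mod_def by blast
  obtain y where y: "y \<in> list_sum Js'" "b - y \<in> F" using Cons.IH ab(3) by blast
  have "x - (z + y) = (a - z) + (b - y)" using ab by simp
  hence "x - (z + y) \<in> F" using z y assms(1) vec.subspace_add by metis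
  moreover have "z + y \<in> list_sum (J' # Js')" using z y by auto
  ultimately show ?case by blast
qed

lemma list_sum_Cons_mono_mod:
  assumes "vec.subspace F" "list_all2 (subset_mod F) Js Js'"
  shows "list_sum (F # Js) \<subseteq> list_sum (F # Js')"
proof
  fix t assume "t \<in> list_sum (F # Js)"
  then obtain f x where fx: "t = f + x" "f \<in> F" "x \<in> list_sum Js" by auto
  obtain y where y: "y \<in> list_sum Js'" "x - y \<in> F" using list_sum_subset_mod[OF assms fx(3)] by blast
  have "f + (x - y) \<in> F" using fx(2) y(2) assms(1) vec.subspace_add by metis
  moreover have "t = (f + (x - y)) + y" using fx(1) by simp
  ultimately show "t \<in> list_sum (F # Js')" using y(1) by (simp only: list_sum.simps) blast
qed

lemma sum_list_map2_diff:
  "length xs = length ys \<Longrightarrow> sum_list (map2 (-) xs ys) = sum_list xs - sum_list (ys :: 'a::ab_group_add list)"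
  by (induction xs ys rule: list_induct2) (auto simp: algebra_simps)

lemma direct_sum_iff_zero_unique:
  assumes "\<forall>V\<in>set Vs. vec.subspace V"
  shows "direct_sum Vs \<longleftrightarrow> (\<forall>zs. list_all2 (\<in>) zs Vs \<and> sum_list zs = 0 \<longrightarrow> (\<forall>z\<in>set zs. z = 0))"
proof
  assume ds: "direct_sum Vs"
  show "\<forall>zs. list_all2 (\<in>) zs Vs \<and> sum_list zs = 0 \<longrightarrow> (\<forall>z\<in>set zs. z = 0)"
  proof clarify
    fix zs z assume zs: "list_all2 (\<in>) zs Vs" "sum_list zs = 0" and z: "z \<in> set zs"
    have "list_all2 (\<in>) (replicate (length Vs) 0) Vs"
      using assms by (simp add: list_all2_conv_all_nth) (metis nth_mem vec.subspace_0)
    hence "zs = replicate (length Vs) 0"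
      using ds zs unfolding direct_sum_def list_all2_conv_all_nth by (simp add: sum_list_replicate)
    thus "z = 0" using z by simp
  qed
next
  assume zero: "\<forall>zs. list_all2 (\<in>) zs Vs \<and> sum_list zs = 0 \<longrightarrow> (\<forall>z\<in>set zs. z = 0)"
  show "direct_sum Vs"
    unfolding direct_sum_def
  proof clarify
    fix xs ys
    assume h: "length xs = length Vs" "length ys = length Vs"
      "\<forall>i<length Vs. xs!i \<in> Vs!i \<and> ys!i \<in> Vs!i" "sum_list xs = sum_list ys"
    have "list_all2 (\<in>) (map2 (-) xs ys) Vs"
      using h assms by (auto simp: list_all2_conv_all_nth intro: vec.subspace_diff)
    moreover have "sum_list (map2 (-) xs ys) = 0" using h by (simp add: sum_list_map2_diff)
    ultimately have "\<forall>z\<in>set (map2 (-) xs ys). z = 0" using zero by blast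
    hence "\<forall>i<length Vs. xs!i = ys!i" using h(1,2) by (auto simp: set_conv_nth)
    thus "xs = ys" using h(1,2) by (simp add: nth_equalityI)
  qed
qed

lemma sum_list_zeros: "\<forall>x\<in>set xs. x = 0 \<Longrightarrow> sum_list xs = (0 :: 'a::monoid_add)"
  by (induction xs) auto

lemma list_all2_subset_mod_witnesses:
  assumes "list_all2 (\<in>) zs Js'" "list_all2 (subset_mod F) Js' Js"
  obtains ws where "list_all2 (\<in>) ws Js" "list_all2 (\<lambda>z w. z - w \<in> F) zs ws"
proof -
  have len: "length Js' = length zs" "length Js = length zs"
    using list_all2_lengthD[OF assms(1)] list_all2_lengthD[OF assms(2)] by simp_all
  have "\<forall>i<length zs. \<exists>w. w \<in> Js!i \<and> zs!i - w \<in> F"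
  proof (intro allI impI)
    fix i assume i: "i < length zs"
    have "zs!i \<in> Js'!i" "subset_mod F (Js'!i) (Js!i)"
      using assms i by (auto simp: list_all2_conv_all_nth)
    thus "\<exists>w. w \<in> Js!i \<and> zs!i - w \<in> F" unfolding subset_mod_def by blast
  qed
  then obtain ws where ws: "length ws = length zs" "\<forall>i<length zs. ws!i \<in> Js!i \<and> zs!i - ws!i \<in> F"
    unfolding Skolem_list_nth by blast
  show ?thesis
    by (rule that[of ws]) (use ws len in \<open>simp_all add: list_all2_conv_all_nth\<close>)
qed

text \<open>A vanishing sum over F # Js' is moved by vectors of F to a vanishing sum over F # Js,
  whose terms are zero; so the original terms lie in F \<inter> J' = {0}.\<close>
lemma direct_sum_Cons_subset_mod:
  assumes F: "vec.subspace F"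
    and Js: "\<forall>J\<in>set Js. vec.subspace J"
    and Js': "\<forall>J'\<in>set Js'. vec.subspace J' \<and> J' \<inter> F = {0}"
    and cover: "list_all2 (subset_mod F) Js' Js"
    and ds: "direct_sum (F # Js)"
  shows "direct_sum (F # Js')"
proof -
  have zero: "list_all2 (\<in>) ws (F # Js) \<Longrightarrow> sum_list ws = 0 \<Longrightarrow> \<forall>w\<in>set ws. w = 0" for ws
    using ds F Js direct_sum_iff_zero_unique[of "F # Js"] by simp
  have "\<forall>V\<in>set (F # Js'). vec.subspace V" using F Js' by simp
  moreover have "\<forall>z\<in>set zs. z = 0" if zs: "list_all2 (\<in>) zs (F # Js')" "sum_list zs = 0" for zs
  proof -
    obtain z0 zr where z: "zs = z0 # zr" "z0 \<in> F" "list_all2 (\<in>) zr Js'" "z0 + sum_list zr = 0"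
      using zs by (cases zs) auto
    then obtain wr where wr: "list_all2 (\<in>) wr Js" "list_all2 (\<lambda>z w. z - w \<in> F) zr wr"
      using cover list_all2_subset_mod_witnesses by metis
    define w0 where "w0 = z0 + (sum_list zr - sum_list wr)"
    have "w0 \<in> F"
      unfolding w0_def using z(2) sum_list_diff_mem_subspace[OF F wr(2)] F vec.subspace_add by blast
    moreover have "w0 + sum_list wr = 0" unfolding w0_def using z(4) by (simp add: algebra_simps)
    ultimately have "w0 = 0" and wr0: "\<forall>w\<in>set wr. w = 0" using zero[of "w0 # wr"] wr(1) by auto
    have "zr!i = 0" if i: "i < length zr" for i
    proof -
      have "zr!i - wr!i \<in> F" "zr!i \<in> Js'!i" using wr(2) z(3) i by (auto simp: list_all2_conv_all_nth)
      moreover have "wr!i = 0" "Js'!i \<in> set Js'"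
        using wr0 wr(2) z(3) i by (auto simp: list_all2_conv_all_nth)
      ultimately show ?thesis using Js' by force
    qed
    hence zr0: "\<forall>z\<in>set zr. z = 0" by (auto simp: set_conv_nth)
    hence "z0 = 0" using z(4) by (simp add: sum_list_zeros)
    thus ?thesis using z(1) zr0 by simp
  qed
  ultimately show ?thesis using direct_sum_iff_zero_unique by blast
qed

lemma sum_list_replicate_0_update: "i < k \<Longrightarrow> sum_list ((replicate k 0)[i := x]) = (x :: 'a::monoid_add)"
  by (induction k arbitrary: i) (auto split: nat.split simp: sum_list_zeros)

lemma direct_sum_Cons_mem_eq_zero:
  assumes ds: "direct_sum (V # Vs)" and sub: "\<forall>W\<in>set (V # Vs). vec.subspace W" and V: "V \<in> set Vs"
  shows "V = {0}"
proof -
  obtain i where i: "i < length Vs" "Vs!i = V" using V by (auto simp: in_set_conv_nth)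
  have "x = 0" if x: "x \<in> V" for x
  proof -
    let ?zs = "x # (replicate (length Vs) 0)[i := - x]"
    have "list_all2 (\<in>) ?zs (V # Vs)"
      using x i sub
      by (auto simp: list_all2_conv_all_nth nth_Cons nth_list_update vec.subspace_neg vec.subspace_0
               split: nat.split)
    moreover have "sum_list ?zs = 0" using i by (simp add: sum_list_replicate_0_update)
    ultimately show "x = 0" using ds sub direct_sum_iff_zero_unique[of "V # Vs"] by auto
  qed
  thus ?thesis using sub vec.subspace_0 by auto
qed

section \<open>A complement of the synchrony subspace in an eigenspace\<close>

locale sync_complement =
  fixes A :: "complex^'n^'n" and lam :: complex and G E :: "(complex^'n) set"
  assumes G_eq: "G = {x. shifted A lam x = 0}"
    and subspace_E: "vec.subspace E" and E_subset_G: "E \<subseteq> G"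
    and sync_inter_E: "full_sync \<inter> E = {0}" and sync_plus_E: "list_sum [full_sync, E] = G"
begin

lemma eigenvector_sync_plus_E:
  assumes "shifted A lam u = 0"
  obtains f e where "f \<in> full_sync" "e \<in> E" "u = f + e"
proof -
  have "u \<in> list_sum [full_sync, E]" using assms sync_plus_E G_eq by simp
  thus ?thesis using that by auto
qed

lemma span_subset_E: "e \<in> E \<Longrightarrow> vec.span {e} \<subseteq> E"
  by (simp add: span_singleton_subset_iff subspace_E)

lemma span_E_ne_sync: "e \<in> E \<Longrightarrow> e \<noteq> 0 \<Longrightarrow> vec.span {e} \<noteq> full_sync"
  using sync_inter_E vec.span_base[of e "{e}"] by auto

lemma jordan_subspace_line_in_E:
  assumes "vec.subspace W" "W \<subseteq> E" "vec.dim W = 1"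
  obtains w where "w \<in> E" "w \<noteq> 0" "W = vec.span {w}" "jordan_subspace A lam W"
proof -
  obtain w where w: "w \<noteq> 0" "W = vec.span {w}"
    using assms(1,3) dim_eq_1_imp_span_singleton by metis
  hence "w \<in> E" using assms(2) vec.span_base[of w "{w}"] by auto
  moreover from this have "shifted A lam w = 0" using E_subset_G G_eq by auto
  ultimately show ?thesis using that w jordan_subspace_eigenvector by metis
qed

lemma special_in_E_if_special_jordan:
  assumes J: "special_jordan A lam J" "vec.dim J = 1"
    and W: "vec.subspace W" "W \<subseteq> E" "vec.dim W = 1" and pc: "poly_closure W = poly_closure J"
  shows "special_in E W"
  unfolding special_in_def
proof (intro conjI allI impI)
  show "vec.subspace W" "W \<subseteq> E" by (fact W(1), fact W(2))
  fix U assume U: "vec.subspace U \<and> U \<subseteq> E \<and> vec.dim U = vec.dim W \<and> poly_closure U \<subseteq> poly_closure W"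
  then obtain u where "u \<in> E" "u \<noteq> 0" "U = vec.span {u}" "jordan_subspace A lam U"
    using W(3) jordan_subspace_line_in_E by metis
  moreover have "poly_closure U = poly_closure J \<or> U = full_sync"
    using J U W(3) pc calculation(4) unfolding special_jordan_def by auto
  ultimately show "poly_closure U = poly_closure W" using span_E_ne_sync pc by auto
qed

lemma special_jordan_iff_special_in_E:
  assumes W: "vec.subspace W" "W \<subseteq> E" "vec.dim W = 1"
  shows "special_jordan A lam W \<longleftrightarrow> special_in E W"
proof
  assume "special_jordan A lam W"
  thus "special_in E W" using special_in_E_if_special_jordan W by blast
next
  assume special: "special_in E W"
  show "special_jordan A lam W"
    unfolding special_jordan_def
  proof (intro conjI allI impI)
    show "jordan_subspace A lam W" using W jordan_subspace_line_in_E by metis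
    fix U assume U: "jordan_subspace A lam U \<and> vec.dim U = vec.dim W \<and> poly_closure U \<subseteq> poly_closure W"
    then obtain u where u: "u \<noteq> 0" "shifted A lam u = 0" "U = vec.span {u}"
      using jordan_subspace_dim_1 W(3) by metis
    then obtain f e where fe: "f \<in> full_sync" "e \<in> E" "u = f + e" using eigenvector_sync_plus_E by metis
    show "poly_closure U = poly_closure W \<or> U = full_sync"
    proof (cases "e = 0")
      case True
      thus ?thesis using span_eq_full_sync[of u] fe u by simp
    next
      case False
      have pc_e: "poly_closure (vec.span {e}) = poly_closure U"
        using poly_closure_span_add_sync fe u by metis
      moreover have "vec.dim (vec.span {e}) = vec.dim W" using False W(3) by simp
      ultimately have "poly_closure (vec.span {e}) = poly_closure W"
        using special U fe(2) span_subset_E unfolding special_in_def by (metis vec.subspace_span)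
      thus ?thesis using pc_e by simp
    qed
  qed
qed

text \<open>The eigenline of a special Jordan subspace J \<noteq> F is spanned by f + e with
  f \<in> F and e \<in> E, e \<noteq> 0; the line spanned by e is the replacement.\<close>
lemma special_jordan_replacement:
  assumes J: "special_jordan A lam J" "J \<noteq> full_sync" "J \<subseteq> G"
  obtains J' where "vec.subspace J'" "J' \<subseteq> E" "vec.dim J' = 1" "special_in E J'"
    "poly_closure J = poly_closure J'"
    "subset_mod full_sync J J'" "subset_mod full_sync J' J"
proof -
  have jordan: "jordan_subspace A lam J" using J(1) unfolding special_jordan_def by blast
  hence dim_J: "vec.dim J = 1" using J(3) G_eq jordan_subspace_in_kernel_dim_1 by metis
  then obtain u where u: "u \<noteq> 0" "shifted A lam u = 0" "J = vec.span {u}"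
    using jordan jordan_subspace_dim_1 by metis
  then obtain f e where fe: "f \<in> full_sync" "e \<in> E" "u = f + e" using eigenvector_sync_plus_E by metis
  have e: "e \<noteq> 0" using span_eq_full_sync[of u] fe u J(2) by auto
  have pc: "poly_closure J = poly_closure (vec.span {e})"
    using poly_closure_span_add_sync fe u by metis
  have "u - e \<in> full_sync" "e - u \<in> full_sync"
    using fe subspace_full_sync vec.subspace_neg by auto
  hence "subset_mod full_sync J (vec.span {e})" "subset_mod full_sync (vec.span {e}) J"
    using u(3) subset_mod_span_singleton subspace_full_sync by auto
  moreover have "special_in E (vec.span {e})"
    using special_in_E_if_special_jordan[OF J(1) dim_J] pc e fe(2) span_subset_E by simp
  moreover have "vec.dim (vec.span {e}) = 1" using e by simp
  ultimately show ?thesis using that pc span_subset_E[OF fe(2)] vec.subspace_span by blast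
qed

lemma special_jordan_line_in_E:
  assumes "special_jordan A lam J" "J \<noteq> full_sync" "J \<subseteq> G"
  shows "\<exists>J'. vec.subspace J' \<and> J' \<subseteq> E \<and> vec.dim J' = 1 \<and> special_in E J' \<and>
           poly_closure J = poly_closure J' \<and> list_sum [full_sync, J] = list_sum [full_sync, J']"
proof -
  obtain J' where J': "vec.subspace J'" "J' \<subseteq> E" "vec.dim J' = 1" "special_in E J'"
      "poly_closure J = poly_closure J'" "subset_mod full_sync J J'" "subset_mod full_sync J' J"
    using special_jordan_replacement assms by metis
  have "list_sum [full_sync, J] = list_sum [full_sync, J']"
    using list_sum_Cons_mono_mod[OF subspace_full_sync, of "[J]" "[J']"]
      list_sum_Cons_mono_mod[OF subspace_full_sync, of "[J']" "[J]"] J'(6,7) by auto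
  thus ?thesis using J' by blast
qed

lemma special_jordan_sum_in_E:
  assumes Js: "\<forall>J\<in>set Js. special_jordan A lam J \<and> vec.dim J = 1 \<and> J \<subseteq> G"
    and ds: "direct_sum (full_sync # Js)"
  shows "\<exists>Js'. length Js' = length Js \<and>
           (\<forall>J'\<in>set Js'. vec.subspace J' \<and> J' \<subseteq> E \<and> vec.dim J' = 1 \<and> special_in E J') \<and>
           direct_sum (full_sync # Js') \<and> list_sum (full_sync # Js) = list_sum (full_sync # Js')"
proof -
  have sub: "\<forall>J\<in>set Js. vec.subspace J"
    using Js unfolding special_jordan_def jordan_subspace_def by auto
  have not_sync: "J \<noteq> full_sync" if "J \<in> set Js" for J
    using direct_sum_Cons_mem_eq_zero[OF ds] sub subspace_full_sync full_sync_ne_zero that by auto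
  let ?R = "\<lambda>J J'. vec.subspace J' \<and> J' \<subseteq> E \<and> vec.dim J' = 1 \<and> special_in E J' \<and>
                  subset_mod full_sync J J' \<and> subset_mod full_sync J' J"
  have "\<forall>i<length Js. \<exists>J'. ?R (Js!i) J'"
  proof (intro allI impI)
    fix i assume "i < length Js"
    hence "Js!i \<in> set Js" by simp
    thus "\<exists>J'. ?R (Js!i) J'"
      using Js not_sync special_jordan_replacement by (metis (no_types, lifting))
  qed
  then obtain Js' where Js': "length Js' = length Js" "\<forall>i<length Js. ?R (Js!i) (Js'!i)"
    unfolding Skolem_list_nth by blast
  have lines: "\<forall>J'\<in>set Js'. vec.subspace J' \<and> J' \<subseteq> E \<and> vec.dim J' = 1 \<and> special_in E J'"
    using Js' by (metis (no_types, lifting) in_set_conv_nth)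
  have cover: "list_all2 (subset_mod full_sync) Js Js'" "list_all2 (subset_mod full_sync) Js' Js"
    using Js' by (auto simp: list_all2_conv_all_nth)
  have "direct_sum (full_sync # Js')"
  proof (rule direct_sum_Cons_subset_mod[OF subspace_full_sync sub _ cover(2) ds])
    show "\<forall>J'\<in>set Js'. vec.subspace J' \<and> J' \<inter> full_sync = {0}"
      using lines sync_inter_E by (auto intro: vec.subspace_0)
  qed
  moreover have "list_sum (full_sync # Js) = list_sum (full_sync # Js')"
    using list_sum_Cons_mono_mod[OF subspace_full_sync] cover by blast
  ultimately show ?thesis using Js'(1) lines by blast
qed

end

theorem mainTheorem4:
  fixes Adj :: "nat^'n^'n" and v :: nat
    and G E :: "(complex^'n) set"
  assumes reg: "regular_network Adj v"
    and G_def: "G = {x. cmat Adj *v x = of_nat v *s x}"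
    and dimG: "vec.dim G > 1"
    and E_sub: "vec.subspace E" and E_G: "E \<subseteq> G"
    and compl: "full_sync \<inter> E = {0}" "list_sum [full_sync, E] = G"
  shows
    "(\<forall>J. special_jordan (cmat Adj) (of_nat v) J \<and> J \<noteq> full_sync \<and> J \<subseteq> G \<longrightarrow>
        (\<exists>J'. vec.subspace J' \<and> J' \<subseteq> E \<and> vec.dim J' = 1 \<and> special_in E J' \<and>
              poly_closure J = poly_closure J' \<and>
              list_sum [full_sync, J] = list_sum [full_sync, J']))
   \<and> (\<forall>W. vec.subspace W \<and> W \<subseteq> E \<and> vec.dim W = 1 \<longrightarrow>
        (special_jordan (cmat Adj) (of_nat v) W \<longleftrightarrow> special_in E W))
   \<and> (\<forall>Js S. (\<forall>J\<in>set Js. special_jordan (cmat Adj) (of_nat v) J \<and> vec.dim J = 1 \<and> J \<subseteq> G)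
           \<and> direct_sum (full_sync # Js) \<and> S = list_sum (full_sync # Js) \<longrightarrow>
        (\<exists>Js'. length Js' = length Js \<and>
              (\<forall>J'\<in>set Js'. vec.subspace J' \<and> J' \<subseteq> E \<and> vec.dim J' = 1 \<and> special_in E J') \<and>
              direct_sum (full_sync # Js') \<and> S = list_sum (full_sync # Js')))"
proof -
  have "G = {x. shifted (cmat Adj) (of_nat v) x = 0}" using G_def unfolding shifted_def by auto
  then interpret sync_complement "cmat Adj" "of_nat v" G E
    using E_sub E_G compl by unfold_locales
  show ?thesis
    by (intro conjI allI impI; elim conjE; (hypsubst)?;
        rule special_jordan_line_in_E special_jordan_iff_special_in_E special_jordan_sum_in_E;
        assumption)
qed

end
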